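(* Consider timing binary modulation with $T_b=1/R$: a transmitter molecule released at $s\in\{0,T_b/2\}$ (equiprobable bits) arrives at $s+t(r_\ell)$; let $z=z_{T_b/2}$ be the number of interfering molecules arriving in $[0,T_b/2]$, independent of $s$ and of $t(r_\ell)$, with mean $\mu$ and variance $\sigma^2>0$. For an integer $n\ge0$, the receiver decides $s=0$ iff the $(n+1)$th arriving molecule (counting interfering molecules and the transmitter's molecule) arrives no later than $T_b/2$. Let $\hat P_{b,\ell}=\frac12\Pr\{t(r_\ell)>T_b/2\}$ and assume $\hat P_{b,\ell}<\frac12$. Then the bit error rate is exactly $$P^\star_{b,\ell}(n)=\hat P_{b,\ell}\Pr\{z=n\}+\tfrac12\big(1-\Pr\{z=n\}\big).$$ If $\Pr\{z=n\}$ is replaced by the continuity-corrected Gaussian approximation $\Pr\{n-\tfrac12<Z<n+\tfrac12\}$ with $Z\sim\mathcal{N}(\mu,\sigma^2)$, the resulting expression, viewed as a function of real $n$, is minimized at $n=\mu$, with minimum value $$\frac12\Big[1+\big(2\hat P_{b,\ell}-1\big)\Big(1-2Q\Big(\frac{1}{2\sigma}\Big)\Big)\Big].$$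
   Context: $Q(x)=\frac{1}{\sqrt{2\pi}}\int_x^\infty e^{-u^2/2}du$ is the Gaussian tail function. $t(r_\ell)$ denotes the first passage time of the transmitter's molecule to the receiver, a positive random variable independent of $s$; with release time $T_b/2$ the molecule arrives strictly after $T_b/2$. *)

theory Defs
  imports "HOL-Probability.Probability"
begin

definition Qfun :: "real \<Rightarrow> real" where
  "Qfun x = (1 / sqrt (2 * pi)) * (LBINT u:{x..}. exp (- (u\<^sup>2) / 2))"

definition num_arrivals ::
  "real \<Rightarrow> ('a \<Rightarrow> nat) \<Rightarrow> ('a \<Rightarrow> real) \<Rightarrow> ('a \<Rightarrow> real) \<Rightarrow> 'a \<Rightarrow> nat" where
  "num_arrivals Tb z s t \<omega> = z \<omega> + (if s \<omega> + t \<omega> \<le> Tb / 2 then 1 else 0)"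

text \<open>The receiver decides s = 0 iff the (n+1)-th arriving molecule arrives no later
  than Tb/2, i.e. iff at least n+1 molecules arrive in [0, Tb/2].\<close>
definition decides_zero ::
  "real \<Rightarrow> nat \<Rightarrow> ('a \<Rightarrow> nat) \<Rightarrow> ('a \<Rightarrow> real) \<Rightarrow> ('a \<Rightarrow> real) \<Rightarrow> 'a \<Rightarrow> bool" where
  "decides_zero Tb n z s t \<omega> \<longleftrightarrow> n + 1 \<le> num_arrivals Tb z s t \<omega>"

definition bit_error_rate ::
  "'a measure \<Rightarrow> real \<Rightarrow> nat \<Rightarrow> ('a \<Rightarrow> nat) \<Rightarrow> ('a \<Rightarrow> real) \<Rightarrow> ('a \<Rightarrow> real) \<Rightarrow> real" where
  "bit_error_rate M Tb n z s t =
     measure M {\<omega> \<in> space M. decides_zero Tb n z s t \<omega> \<noteq> (s \<omega> = 0)}"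

definition Phat :: "'a measure \<Rightarrow> real \<Rightarrow> ('a \<Rightarrow> real) \<Rightarrow> real" where
  "Phat M Tb t = 1 / 2 * measure M {\<omega> \<in> space M. t \<omega> > Tb / 2}"

definition gauss_prob :: "real \<Rightarrow> real \<Rightarrow> real \<Rightarrow> real" where
  "gauss_prob \<mu> \<sigma> x = measure (density lborel (normal_density \<mu> \<sigma>)) {x - 1/2 <..< x + 1/2}"

definition approx_ber :: "real \<Rightarrow> real \<Rightarrow> real \<Rightarrow> real \<Rightarrow> real" where
  "approx_ber P \<mu> \<sigma> x = P * gauss_prob \<mu> \<sigma> x + 1 / 2 * (1 - gauss_prob \<mu> \<sigma> x)"

end

theory Submission
  imports Defs
begin

text \<open>
  The transmitter's molecule counts towards the \<open>n+1\<close> arrivals only if it is sent at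
  \<open>s = 0\<close> and is on time, so the decision is wrong exactly when \<open>z < n\<close> and \<open>s = 0\<close>,
  when \<open>z = n\<close>, \<open>s = 0\<close> and the molecule is late, or when \<open>z > n\<close> and \<open>s = T\<^sub>b/2\<close>;
  independence turns these into the stated error probability.
  The approximate error rate is \<open>1/2 + (P - 1/2) g(x)\<close>, where \<open>g(x)\<close> is the Gaussian mass
  of the unit window centred at \<open>x\<close>, so with \<open>P < 1/2\<close> it is minimal where \<open>g\<close> is maximal.
  By symmetry of the density it suffices to take \<open>x \<ge> \<mu>\<close>; moving the window from \<open>\<mu>\<close> to
  \<open>x\<close> exchanges a piece of mass for its translate by one unit, which lies farther from the mean.
\<close>

abbreviation normal_measure :: "real \<Rightarrow> real \<Rightarrow> real measure" where
  "normal_measure \<mu> \<sigma> \<equiv> density lborel (normal_density \<mu> \<sigma>)"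

lemma measure_normal_eq_integral:
  assumes "A \<in> sets borel"
  shows "measure (normal_measure \<mu> \<sigma>) A = (\<integral>u. normal_density \<mu> \<sigma> u * indicator A u \<partial>lborel)"
proof -
  have "measure (normal_measure \<mu> \<sigma>) A = (\<integral>u. indicator A u \<partial>normal_measure \<mu> \<sigma>)"
    using assms by simp
  also have "\<dots> = (\<integral>u. normal_density \<mu> \<sigma> u *\<^sub>R indicator A u \<partial>lborel)"
    using assms by (intro integral_density) auto
  finally show ?thesis by simp
qed

lemma integrable_normal_density_indicator:
  "\<sigma> > 0 \<Longrightarrow> A \<in> sets borel \<Longrightarrow> integrable lborel (\<lambda>u. normal_density \<mu> \<sigma> u * indicator A u)"
  by (rule integrable_real_mult_indicator) auto

lemma AE_normal_measure_neq: "AE u in normal_measure \<mu> \<sigma>. u \<noteq> c"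
  using AE_lborel_singleton[of c] by (simp add: AE_density) (auto elim: eventually_mono)

lemma normal_density_le_of_dist_le:
  assumes "\<bar>u - \<mu>\<bar> \<le> \<bar>v - \<mu>\<bar>"
  shows "normal_density \<mu> \<sigma> v \<le> normal_density \<mu> \<sigma> u"
proof -
  have "(u - \<mu>)\<^sup>2 \<le> (v - \<mu>)\<^sup>2"
    using assms by (metis abs_le_square_iff)
  then have "- (v - \<mu>)\<^sup>2 / (2 * \<sigma>\<^sup>2) \<le> - (u - \<mu>)\<^sup>2 / (2 * \<sigma>\<^sup>2)"
    by (intro divide_right_mono) auto
  then show ?thesis
    unfolding normal_density_def by (intro mult_left_mono) auto
qed

lemma normal_density_reflect: "normal_density \<mu> \<sigma> (2 * \<mu> - v) = normal_density \<mu> \<sigma> v"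
  unfolding normal_density_def by (simp add: power2_eq_square algebra_simps)

lemma measure_normal_reflect:
  assumes "A \<in> sets borel"
  shows "measure (normal_measure \<mu> \<sigma>) ((\<lambda>v. 2 * \<mu> - v) -` A) = measure (normal_measure \<mu> \<sigma>) A"
proof -
  have "measure (normal_measure \<mu> \<sigma>) A
      = \<bar>-1\<bar> *\<^sub>R (\<integral>v. normal_density \<mu> \<sigma> (2 * \<mu> + -1 * v) * indicator A (2 * \<mu> + -1 * v) \<partial>lborel)"
    unfolding measure_normal_eq_integral[OF assms] by (rule lborel_integral_real_affine) simp
  also have "\<dots> = (\<integral>v. normal_density \<mu> \<sigma> v * indicator ((\<lambda>v. 2 * \<mu> - v) -` A) v \<partial>lborel)"
    using normal_density_reflect[of \<mu> \<sigma>] by (simp add: indicator_def)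
  also have "\<dots> = measure (normal_measure \<mu> \<sigma>) ((\<lambda>v. 2 * \<mu> - v) -` A)"
    by (intro measure_normal_eq_integral[symmetric] measurable_sets_borel[OF _ assms]) auto
  finally show ?thesis ..
qed

lemma measure_normal_shift_le:
  assumes "\<sigma> > 0" "A \<in> sets borel" "0 \<le> c" "A \<subseteq> {\<mu> - c / 2..}"
  shows "measure (normal_measure \<mu> \<sigma>) ((\<lambda>u. u - c) -` A) \<le> measure (normal_measure \<mu> \<sigma>) A"
proof -
  have shifted_borel: "(\<lambda>u. u - c) -` A \<in> sets borel"
    by (rule measurable_sets_borel[OF _ assms(2)]) auto
  have "measure (normal_measure \<mu> \<sigma>) ((\<lambda>u. u - c) -` A)
      = \<bar>1\<bar> *\<^sub>R (\<integral>v. normal_density \<mu> \<sigma> (c + 1 * v) * indicator ((\<lambda>u. u - c) -` A) (c + 1 * v) \<partial>lborel)"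
    unfolding measure_normal_eq_integral[OF shifted_borel]
    by (rule lborel_integral_real_affine) simp
  also have "\<dots> = (\<integral>v. normal_density \<mu> \<sigma> (c + v) * indicator A v \<partial>lborel)"
    by (simp add: indicator_def)
  also have "\<dots> \<le> (\<integral>v. normal_density \<mu> \<sigma> v * indicator A v \<partial>lborel)"
  proof (rule integral_mono)
    have "integrable lborel (\<lambda>v. normal_density \<mu> \<sigma> (c + 1 * v) * indicator ((\<lambda>u. u - c) -` A) (c + 1 * v))"
      by (intro lborel_integrable_real_affine integrable_normal_density_indicator shifted_borel assms(1)) simp
    then show "integrable lborel (\<lambda>v. normal_density \<mu> \<sigma> (c + v) * indicator A v)"
      by (simp add: indicator_def)
    show "integrable lborel (\<lambda>v. normal_density \<mu> \<sigma> v * indicator A v)"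
      using assms(1,2) by (rule integrable_normal_density_indicator)
    fix v
    show "normal_density \<mu> \<sigma> (c + v) * indicator A v \<le> normal_density \<mu> \<sigma> v * indicator A v"
      using assms(3,4) by (auto simp: indicator_def intro!: normal_density_le_of_dist_le)
  qed
  also have "\<dots> = measure (normal_measure \<mu> \<sigma>) A"
    using assms(2) by (rule measure_normal_eq_integral[symmetric])
  finally show ?thesis .
qed

lemma measure_normal_atLeast:
  assumes "\<sigma> > 0"
  shows "measure (normal_measure \<mu> \<sigma>) {a..} = Qfun ((a - \<mu>) / \<sigma>)"
proof -
  have substituted: "\<sigma> * (normal_density \<mu> \<sigma> (\<mu> + \<sigma> * v) * indicator {a..} (\<mu> + \<sigma> * v))
      = 1 / sqrt (2 * pi) * (indicator {(a - \<mu>) / \<sigma>..} v * exp (- (v\<^sup>2) / 2))" for v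
  proof -
    have "\<sigma> * normal_density \<mu> \<sigma> (\<mu> + \<sigma> * v) = 1 / sqrt (2 * pi) * exp (- (v\<^sup>2) / 2)"
      using assms unfolding normal_density_def by (simp add: real_sqrt_mult power_mult_distrib)
    moreover have "a \<le> \<mu> + \<sigma> * v \<longleftrightarrow> (a - \<mu>) / \<sigma> \<le> v"
      using assms by (simp add: field_simps)
    ultimately show ?thesis
      by (simp add: indicator_def)
  qed
  have "measure (normal_measure \<mu> \<sigma>) {a..}
      = \<bar>\<sigma>\<bar> *\<^sub>R (\<integral>v. normal_density \<mu> \<sigma> (\<mu> + \<sigma> * v) * indicator {a..} (\<mu> + \<sigma> * v) \<partial>lborel)"
    unfolding measure_normal_eq_integral[OF atLeast_borel]
    by (rule lborel_integral_real_affine) (use assms in simp)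
  also have "\<dots> = (\<integral>v. 1 / sqrt (2 * pi) * (indicator {(a - \<mu>) / \<sigma>..} v * exp (- (v\<^sup>2) / 2)) \<partial>lborel)"
    using assms by (simp add: substituted flip: integral_mult_right_zero)
  also have "\<dots> = Qfun ((a - \<mu>) / \<sigma>)"
    unfolding Qfun_def set_lebesgue_integral_def by simp
  finally show ?thesis .
qed

lemma gauss_prob_reflect: "gauss_prob \<mu> \<sigma> (2 * \<mu> - x) = gauss_prob \<mu> \<sigma> x"
proof -
  have "(\<lambda>v. 2 * \<mu> - v) -` {x - 1/2<..<x + 1/2} = {2 * \<mu> - x - 1/2<..<2 * \<mu> - x + 1/2}"
    by auto
  then show ?thesis
    unfolding gauss_prob_def using measure_normal_reflect[of "{x - 1/2<..<x + 1/2}" \<mu> \<sigma>] by simp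
qed

lemma gauss_prob_center:
  assumes "\<sigma> > 0"
  shows "gauss_prob \<mu> \<sigma> \<mu> = 1 - 2 * Qfun (1 / (2 * \<sigma>))"
proof -
  interpret N: prob_space "normal_measure \<mu> \<sigma>"
    using assms by (rule prob_space_normal_density)
  have upper: "N.prob {\<mu> + 1/2..} = Qfun (1 / (2 * \<sigma>))"
    using measure_normal_atLeast[OF assms, of \<mu> "\<mu> + 1/2"] by simp
  have "(\<lambda>v. 2 * \<mu> - v) -` {\<mu> + 1/2..} = {..\<mu> - 1/2}"
    by auto
  then have lower: "N.prob {..\<mu> - 1/2} = Qfun (1 / (2 * \<sigma>))"
    using measure_normal_reflect[of "{\<mu> + 1/2..}" \<mu> \<sigma>] upper by simp
  have "{..\<mu> - 1/2} \<union> {\<mu> - 1/2<..<\<mu> + 1/2} \<union> {\<mu> + 1/2..} = space (normal_measure \<mu> \<sigma>)"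
    by auto
  then have "1 = N.prob ({..\<mu> - 1/2} \<union> {\<mu> - 1/2<..<\<mu> + 1/2} \<union> {\<mu> + 1/2..})"
    using N.prob_space by simp
  also have "\<dots> = N.prob {..\<mu> - 1/2} + gauss_prob \<mu> \<sigma> \<mu> + N.prob {\<mu> + 1/2..}"
    unfolding gauss_prob_def by (subst N.finite_measure_Union; auto)+
  finally show ?thesis
    using upper lower by simp
qed

lemma gauss_prob_le_center_of_ge:
  assumes "\<sigma> > 0" "\<mu> \<le> x"
  shows "gauss_prob \<mu> \<sigma> x \<le> gauss_prob \<mu> \<sigma> \<mu>"
proof -
  interpret N: prob_space "normal_measure \<mu> \<sigma>"
    using assms(1) by (rule prob_space_normal_density)
  have "N.prob {\<mu> + 1/2<..x + 1/2} \<le> N.prob {\<mu> - 1/2<..x - 1/2}"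
  proof -
    have "(\<lambda>u. u - 1) -` {\<mu> - 1/2<..x - 1/2} = {\<mu> + 1/2<..x + 1/2}"
      by auto
    then show ?thesis
      using measure_normal_shift_le[OF assms(1), where A = "{\<mu> - 1/2<..x - 1/2}" and c = 1 and \<mu> = \<mu>] by fastforce
  qed
  moreover have "gauss_prob \<mu> \<sigma> \<mu> + N.prob {\<mu> + 1/2<..x + 1/2}
      = N.prob {\<mu> - 1/2<..x - 1/2} + gauss_prob \<mu> \<sigma> x"
  proof -
    have "gauss_prob \<mu> \<sigma> \<mu> + N.prob {\<mu> + 1/2<..x + 1/2}
        = N.prob ({\<mu> - 1/2<..<\<mu> + 1/2} \<union> {\<mu> + 1/2<..x + 1/2})"
      unfolding gauss_prob_def by (subst N.finite_measure_Union) auto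
    also have "\<dots> = N.prob ({\<mu> - 1/2<..x - 1/2} \<union> {x - 1/2<..<x + 1/2})"
    proof (rule measure_eq_AE)
      have "AE u in normal_measure \<mu> \<sigma>. u \<noteq> \<mu> + 1/2 \<and> u \<noteq> x + 1/2"
        by (simp add: AE_conj_iff AE_normal_measure_neq)
      then show "AE u in normal_measure \<mu> \<sigma>.
          u \<in> {\<mu> - 1/2<..<\<mu> + 1/2} \<union> {\<mu> + 1/2<..x + 1/2} \<longleftrightarrow> u \<in> {\<mu> - 1/2<..x - 1/2} \<union> {x - 1/2<..<x + 1/2}"
        by eventually_elim (use assms(2) in auto)
    qed auto
    also have "\<dots> = N.prob {\<mu> - 1/2<..x - 1/2} + gauss_prob \<mu> \<sigma> x"
      unfolding gauss_prob_def by (subst N.finite_measure_Union) auto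
    finally show ?thesis .
  qed
  ultimately show ?thesis
    by linarith
qed

lemma gauss_prob_le_center:
  assumes "\<sigma> > 0"
  shows "gauss_prob \<mu> \<sigma> x \<le> gauss_prob \<mu> \<sigma> \<mu>"
proof (cases "\<mu> \<le> x")
  case True
  then show ?thesis
    using gauss_prob_le_center_of_ge[OF assms] by blast
next
  case False
  then show ?thesis
    using gauss_prob_le_center_of_ge[OF assms, where \<mu> = \<mu> and x = "2 * \<mu> - x"] by (simp add: gauss_prob_reflect)
qed

lemma approx_ber_eq: "approx_ber P \<mu> \<sigma> x = 1/2 + (P - 1/2) * gauss_prob \<mu> \<sigma> x"
  unfolding approx_ber_def by (simp add: algebra_simps)

lemma approx_ber_center_le:
  assumes "\<sigma> > 0" "P \<le> 1/2"
  shows "approx_ber P \<mu> \<sigma> \<mu> \<le> approx_ber P \<mu> \<sigma> x"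
  unfolding approx_ber_eq
  using gauss_prob_le_center[OF assms(1), of \<mu> x] assms(2) by (simp add: mult_left_mono_neg)

lemma approx_ber_center:
  assumes "\<sigma> > 0"
  shows "approx_ber P \<mu> \<sigma> \<mu> = 1/2 * (1 + (2 * P - 1) * (1 - 2 * Qfun (1 / (2 * \<sigma>))))"
  unfolding approx_ber_eq gauss_prob_center[OF assms] by (simp add: algebra_simps)

lemma decision_error_iff:
  assumes "Tb > 0" "s \<omega> = 0 \<or> s \<omega> = Tb / 2" "t \<omega> > 0"
  shows "decides_zero Tb n z s t \<omega> \<noteq> (s \<omega> = 0) \<longleftrightarrow>
    (z \<omega> < n \<and> s \<omega> = 0) \<or> (z \<omega> = n \<and> s \<omega> = 0 \<and> t \<omega> > Tb / 2) \<or> (n < z \<omega> \<and> s \<omega> \<noteq> 0)"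
  using assms unfolding decides_zero_def num_arrivals_def by auto

lemma (in prob_space) prob_less_eq_greater:
  fixes X :: "'a \<Rightarrow> 'b::linorder"
  assumes [measurable]: "X \<in> measurable M (count_space UNIV)"
  shows "\<P>(\<omega> in M. X \<omega> < c) + \<P>(\<omega> in M. X \<omega> = c) + \<P>(\<omega> in M. c < X \<omega>) = 1"
proof -
  have "\<P>(\<omega> in M. X \<omega> < c) + \<P>(\<omega> in M. X \<omega> = c) + \<P>(\<omega> in M. c < X \<omega>)
      = prob ({\<omega> \<in> space M. X \<omega> < c} \<union> {\<omega> \<in> space M. X \<omega> = c} \<union> {\<omega> \<in> space M. c < X \<omega>})"
    by (subst finite_measure_Union; auto)+
  also have "{\<omega> \<in> space M. X \<omega> < c} \<union> {\<omega> \<in> space M. X \<omega> = c} \<union> {\<omega> \<in> space M. c < X \<omega>} = space M"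
    by auto
  finally show ?thesis
    by (simp add: prob_space)
qed

lemma bit_error_rate_eq:
  fixes M :: "'a measure" and z :: "'a \<Rightarrow> nat" and s t :: "'a \<Rightarrow> real"
  assumes "prob_space M" and "Tb > 0"
    and [measurable]: "s \<in> borel_measurable M" "t \<in> borel_measurable M"
      "z \<in> measurable M (count_space UNIV)"
    and s_values: "\<forall>\<omega>\<in>space M. s \<omega> = 0 \<or> s \<omega> = Tb / 2"
    and s_zero: "measure M {\<omega> \<in> space M. s \<omega> = 0} = 1 / 2"
    and t_pos: "\<forall>\<omega>\<in>space M. t \<omega> > 0"
    and indep_s_t: "prob_space.indep_var M borel s borel t"
    and indep_z: "\<forall>A B. B \<in> sets (borel :: (real \<times> real) measure) \<longrightarrow>
           measure M {\<omega> \<in> space M. z \<omega> \<in> A \<and> (s \<omega>, t \<omega>) \<in> B}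
           = measure M {\<omega> \<in> space M. z \<omega> \<in> A} * measure M {\<omega> \<in> space M. (s \<omega>, t \<omega>) \<in> B}"
  shows "bit_error_rate M Tb n z s t =
           Phat M Tb t * measure M {\<omega> \<in> space M. z \<omega> = n}
           + 1 / 2 * (1 - measure M {\<omega> \<in> space M. z \<omega> = n})"
proof -
  interpret prob_space M by fact
  have indep_z_st: "\<P>(\<omega> in M. P (z \<omega>) \<and> s \<omega> \<in> S \<and> t \<omega> \<in> T)
      = \<P>(\<omega> in M. P (z \<omega>)) * \<P>(\<omega> in M. s \<omega> \<in> S \<and> t \<omega> \<in> T)"
    if "S \<in> sets borel" "T \<in> sets borel" for P S T
  proof -
    have "S \<times> T \<in> sets (borel :: (real \<times> real) measure)"
      using that unfolding borel_prod[symmetric] by auto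
    then show ?thesis
      using indep_z[rule_format, of "S \<times> T" "Collect P"] by simp
  qed
  have early: "\<P>(\<omega> in M. z \<omega> < n \<and> s \<omega> = 0) = \<P>(\<omega> in M. z \<omega> < n) / 2"
    using indep_z_st[of "{0}" UNIV "\<lambda>k. k < n"] s_zero by simp
  have late: "\<P>(\<omega> in M. n < z \<omega> \<and> s \<omega> \<noteq> 0) = \<P>(\<omega> in M. n < z \<omega>) / 2"
    using indep_z_st[of "-{0}" UNIV "\<lambda>k. n < k"] prob_neg[of "\<lambda>\<omega>. s \<omega> = 0"] s_zero by simp
  have on_time: "\<P>(\<omega> in M. z \<omega> = n \<and> s \<omega> = 0 \<and> t \<omega> > Tb / 2) = \<P>(\<omega> in M. z \<omega> = n) * Phat M Tb t"
    using indep_z_st[of "{0}" "{Tb / 2<..}" "\<lambda>k. k = n"] s_zero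
      prob_indep_random_variable[OF indep_s_t, of "{0}" "{Tb / 2<..}"]
    unfolding Phat_def by simp
  have "bit_error_rate M Tb n z s t
      = \<P>(\<omega> in M. (z \<omega> < n \<and> s \<omega> = 0) \<or> (z \<omega> = n \<and> s \<omega> = 0 \<and> t \<omega> > Tb / 2) \<or> (n < z \<omega> \<and> s \<omega> \<noteq> 0))"
    unfolding bit_error_rate_def using assms(2) s_values t_pos
    by (intro arg_cong[where f = "measure M"] Collect_cong conj_cong refl decision_error_iff) auto
  also have "\<dots> = \<P>(\<omega> in M. z \<omega> < n \<and> s \<omega> = 0) + \<P>(\<omega> in M. z \<omega> = n \<and> s \<omega> = 0 \<and> t \<omega> > Tb / 2)
      + \<P>(\<omega> in M. n < z \<omega> \<and> s \<omega> \<noteq> 0)"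
  proof -
    let ?early = "{\<omega> \<in> space M. z \<omega> < n \<and> s \<omega> = 0}"
    let ?on_time = "{\<omega> \<in> space M. z \<omega> = n \<and> s \<omega> = 0 \<and> t \<omega> > Tb / 2}"
    let ?late = "{\<omega> \<in> space M. n < z \<omega> \<and> s \<omega> \<noteq> 0}"
    have events: "?early \<in> events" "?on_time \<in> events" "?late \<in> events"
      by measurable
    have "{\<omega> \<in> space M. (z \<omega> < n \<and> s \<omega> = 0) \<or> (z \<omega> = n \<and> s \<omega> = 0 \<and> t \<omega> > Tb / 2) \<or> (n < z \<omega> \<and> s \<omega> \<noteq> 0)}
        = ?early \<union> ?on_time \<union> ?late"
      by auto
    moreover have disjoint: "?early \<inter> ?on_time = {}" "(?early \<union> ?on_time) \<inter> ?late = {}"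
      by auto
    ultimately show ?thesis
      by (simp only: finite_measure_Union[OF sets.Un[OF events(1,2)] events(3) disjoint(2)]
          finite_measure_Union[OF events(1,2) disjoint(1)])
  qed
  also have "\<dots> = \<P>(\<omega> in M. z \<omega> < n) / 2 + \<P>(\<omega> in M. z \<omega> = n) * Phat M Tb t
      + \<P>(\<omega> in M. n < z \<omega>) / 2"
    by (simp only: early on_time late)
  also have "\<dots> = Phat M Tb t * \<P>(\<omega> in M. z \<omega> = n) + 1 / 2 * (1 - \<P>(\<omega> in M. z \<omega> = n))"
    using prob_less_eq_greater[of z n] by simp
  finally show ?thesis .
qed

theorem theorem6:
  fixes M :: "'a measure" and R Tb :: real and n :: nat
    and z :: "'a \<Rightarrow> nat" and s t :: "'a \<Rightarrow> real" and \<mu> \<sigma> :: real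
  assumes "prob_space M"
    and "R > 0" and "Tb = 1 / R"
    and "s \<in> borel_measurable M" and "t \<in> borel_measurable M"
    and "z \<in> measurable M (count_space UNIV)"
    and "\<forall>\<omega>\<in>space M. s \<omega> = 0 \<or> s \<omega> = Tb / 2"
    and "measure M {\<omega> \<in> space M. s \<omega> = 0} = 1 / 2"
    and "\<forall>\<omega>\<in>space M. t \<omega> > 0"
    and "prob_space.indep_var M borel s borel t"
    and "\<forall>A B. B \<in> sets (borel :: (real \<times> real) measure) \<longrightarrow>
           measure M {\<omega> \<in> space M. z \<omega> \<in> A \<and> (s \<omega>, t \<omega>) \<in> B}
           = measure M {\<omega> \<in> space M. z \<omega> \<in> A} * measure M {\<omega> \<in> space M. (s \<omega>, t \<omega>) \<in> B}"
    and "integrable M (\<lambda>\<omega>. real (z \<omega>))"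
    and "(\<integral>\<omega>. real (z \<omega>) \<partial>M) = \<mu>"
    and "integrable M (\<lambda>\<omega>. (real (z \<omega>) - \<mu>)\<^sup>2)"
    and "(\<integral>\<omega>. (real (z \<omega>) - \<mu>)\<^sup>2 \<partial>M) = \<sigma>\<^sup>2"
    and "\<sigma> > 0"
    and "Phat M Tb t < 1 / 2"
  shows "bit_error_rate M Tb n z s t =
           Phat M Tb t * measure M {\<omega> \<in> space M. z \<omega> = n}
           + 1 / 2 * (1 - measure M {\<omega> \<in> space M. z \<omega> = n})
         \<and> (\<forall>x::real. approx_ber (Phat M Tb t) \<mu> \<sigma> \<mu> \<le> approx_ber (Phat M Tb t) \<mu> \<sigma> x)
         \<and> approx_ber (Phat M Tb t) \<mu> \<sigma> \<mu> =
           1 / 2 * (1 + (2 * Phat M Tb t - 1) * (1 - 2 * Qfun (1 / (2 * \<sigma>))))"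
proof (intro conjI allI)
  \<comment> \<open>The moment hypotheses only explain where \<open>\<mu>\<close> and \<open>\<sigma>\<close> come from; the argument does not use them.\<close>
  have "Tb > 0"
    using assms(2,3) by simp
  with assms(1,4-11) show "bit_error_rate M Tb n z s t =
      Phat M Tb t * measure M {\<omega> \<in> space M. z \<omega> = n} + 1 / 2 * (1 - measure M {\<omega> \<in> space M. z \<omega> = n})"
    by (intro bit_error_rate_eq) auto
  show "approx_ber (Phat M Tb t) \<mu> \<sigma> \<mu> \<le> approx_ber (Phat M Tb t) \<mu> \<sigma> x" for x
    using assms(16,17) by (intro approx_ber_center_le) auto
  show "approx_ber (Phat M Tb t) \<mu> \<sigma> \<mu> = 1 / 2 * (1 + (2 * Phat M Tb t - 1) * (1 - 2 * Qfun (1 / (2 * \<sigma>))))"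
    using assms(16) by (rule approx_ber_center)
qed

end
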